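(* Let $C:\{0,1\}^n\to\{0,1\}^m$ be any map, $q\ge1$, $\varepsilon\in(0,1/2]$. For every $Q\in\binom{[2m]}{q}$, the set $H_Q=\{i\in[n]:Q\in\mathrm{Good}_i\}$ satisfies $|H_Q|\le q/(1-\mathcal H(1/2+\varepsilon/4))$.
   Context: $\mathcal H(p)=-p\log_2p-(1-p)\log_2(1-p)$ is the binary entropy function. For $x\in\{0,1\}^n$, $C'(x)\in\{0,1\}^{2m}$ is $C(x)$ followed by $m$ independent uniformly random bits (independent of $x$). For $i\in[n]$, $\mathrm{Good}_i$ is the set of $Q\in\binom{[2m]}{q}$ for which there exists $f:\{0,1\}^q\to\{0,1\}$ with $\Pr[f(C'(x)_Q)=x_i]\ge1/2+\varepsilon/4$, the probability taken over uniform $x\in\{0,1\}^n$ and the padded random bits; $C'(x)_Q$ is the restriction of $C'(x)$ to $Q$ in increasing order. *)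

theory Defs
  imports Complex_Main
begin

definition bin_entropy :: "real \<Rightarrow> real" where
  "bin_entropy p = - p * log 2 p - (1 - p) * log 2 (1 - p)"

text \<open>The padded code word is
  C'(x) = C x @ r for a uniformly random r of length m; C'(x)_Q is nths (C x @ r) Q
  (positions 0-indexed, in increasing order).\<close>
definition good :: "nat \<Rightarrow> nat \<Rightarrow> (bool list \<Rightarrow> bool list) \<Rightarrow> real \<Rightarrow> nat \<Rightarrow> nat set \<Rightarrow> bool" where
  "good n m C \<epsilon> i Q \<longleftrightarrow>
     (\<exists>f :: bool list \<Rightarrow> bool.
        real (card {(x, r). length x = n \<and> length r = m \<and> f (nths (C x @ r) Q) = x ! i})
          / 2 ^ (n + m) \<ge> 1/2 + \<epsilon>/4)"

end

theory Submission
  imports Defs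
begin

text \<open>Let \<open>k\<close> be the number of good indices, \<open>F\<^sub>i\<close> the corresponding predictors,
  \<open>p = 1/2 + \<epsilon>/4\<close>, and \<open>A\<close> the number of good indices \<open>i\<close> at which \<open>F\<^sub>i\<close>, applied to the
  \<open>q\<close> observed bits, guesses \<open>x\<^sub>i\<close> correctly; the mean of \<open>A\<close> is at least \<open>k p\<close>.
  Replacing the actual observation by a sum over all \<open>2\<^sup>q\<close> possible ones decouples the
  guesses from \<open>x\<close>, so \<open>E b\<^sup>A \<le> 2\<^sup>q ((1 + b)/2)\<^sup>k\<close> for every \<open>b \<ge> 0\<close>, while convexity
  gives \<open>E b\<^sup>A \<ge> b\<^sup>k\<^sup>p\<close>. For \<open>b = p/(1 - p)\<close> the two bounds combine to
  \<open>k (1 - H(p)) \<le> q\<close>.\<close>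

lemma sum_lists_length_prod_nth:
  fixes w :: "nat \<Rightarrow> 'a::finite \<Rightarrow> 'b::comm_semiring_1"
  shows "(\<Sum>x | length x = n. \<Prod>i<n. w i (x ! i)) = (\<Prod>i<n. \<Sum>a\<in>UNIV. w i a)"
proof (induction n arbitrary: w)
  case 0
  have "{x::'a list. length x = 0} = {[]}" by auto
  then show ?case by simp
next
  case (Suc n)
  have lists_Suc: "{x::'a list. length x = Suc n} = (\<lambda>(xs, a). a # xs) ` ({xs. length xs = n} \<times> UNIV)"
    using lists_length_Suc_eq[of UNIV n] by simp
  have "inj_on (\<lambda>(xs, a). a # xs) ({xs::'a list. length xs = n} \<times> UNIV)"
    by (auto simp: inj_on_def)
  then have "(\<Sum>x | length x = Suc n. \<Prod>i<Suc n. w i (x ! i))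
      = (\<Sum>xs | length xs = n. \<Sum>a\<in>UNIV. w 0 a * (\<Prod>i<n. w (Suc i) (xs ! i)))"
    by (simp add: lists_Suc sum.reindex sum.cartesian_product prod.lessThan_Suc_shift
        case_prod_unfold del: prod.lessThan_Suc)
  also have "\<dots> = (\<Sum>a\<in>UNIV. w 0 a) * (\<Prod>i<n. \<Sum>a\<in>UNIV. w (Suc i) a)"
    using Suc.IH[of "\<lambda>i. w (Suc i)"]
    by (subst sum.swap) (simp flip: sum_distrib_left sum_distrib_right)
  finally show ?case
    by (simp add: prod.lessThan_Suc_shift del: prod.lessThan_Suc)
qed

lemma card_bool_lists_length: "card {x::bool list. length x = n} = 2 ^ n"
  using card_lists_length_eq[of "UNIV :: bool set" n] by simp

lemma sum_lists_power_card_agree: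
  fixes b :: "'a::comm_semiring_1" and g :: "nat \<Rightarrow> bool"
  assumes "G \<subseteq> {..<n}"
  shows "(\<Sum>x | length x = n. b ^ card {i\<in>G. g i = x ! i}) = (1 + b) ^ card G * 2 ^ (n - card G)"
proof -
  have power_as_prod: "b ^ card {i\<in>G. g i = x ! i} = (\<Prod>i<n. if i \<in> G \<and> g i = x ! i then b else 1)"
    for x :: "bool list"
  proof -
    have "{..<n} \<inter> {i. i \<in> G \<and> g i = x ! i} = {i\<in>G. g i = x ! i}" using assms by auto
    then show ?thesis by (simp add: prod.If_cases)
  qed
  have sum_bool: "(\<Sum>a\<in>UNIV. if i \<in> G \<and> g i = a then b else 1) = (if i \<in> G then 1 + b else 2)" for i
    by (cases "g i") (auto simp: UNIV_bool add.commute)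
  have "{..<n} \<inter> {i. i \<in> G} = G" "{..<n} \<inter> - {i. i \<in> G} = {..<n} - G" using assms by auto
  then have "(\<Prod>i<n. if i \<in> G then 1 + b else 2) = (1 + b) ^ card G * 2 ^ (n - card G)"
    using assms by (simp add: prod.If_cases card_Diff_subset finite_subset)
  then show ?thesis
    using sum_lists_length_prod_nth[of "\<lambda>i a. if i \<in> G \<and> g i = a then b else 1" n]
    by (simp add: power_as_prod sum_bool)
qed

lemma sum_card_filter_commute:
  assumes "finite A" "finite B"
  shows "(\<Sum>a\<in>A. card {b\<in>B. P a b}) = (\<Sum>b\<in>B. card {a\<in>A. P a b})"
proof -
  have "(\<Sum>a\<in>A. card {b\<in>B. P a b}) = (\<Sum>a\<in>A. \<Sum>b\<in>B. of_bool (P a b))"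
    using assms by (simp add: Int_def)
  also have "\<dots> = (\<Sum>b\<in>B. card {a\<in>A. P a b})"
    using assms by (subst sum.swap) (simp add: Int_def)
  finally show ?thesis .
qed

lemma card_mult_powr_mean_le_sum_powr:
  fixes A :: "'a \<Rightarrow> real"
  assumes "finite \<Omega>" "\<Omega> \<noteq> {}" "0 < b"
  shows "card \<Omega> * b powr ((\<Sum>\<omega>\<in>\<Omega>. A \<omega>) / card \<Omega>) \<le> (\<Sum>\<omega>\<in>\<Omega>. b powr A \<omega>)"
proof -
  define \<mu> where "\<mu> = (\<Sum>\<omega>\<in>\<Omega>. A \<omega>) / card \<Omega>"
  have tangent: "b powr \<mu> * (1 + ln b * (A \<omega> - \<mu>)) \<le> b powr A \<omega>" for \<omega>
  proof -
    have "b powr A \<omega> = b powr \<mu> * exp (ln b * (A \<omega> - \<mu>))"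
      using assms(3) by (simp add: powr_def flip: exp_add) (simp add: algebra_simps)
    then show ?thesis
      by (simp add: exp_ge_add_one_self mult_left_mono)
  qed
  have "(\<Sum>\<omega>\<in>\<Omega>. A \<omega> - \<mu>) = 0"
    using assms(1,2) by (simp add: sum_subtractf \<mu>_def)
  then have "(\<Sum>\<omega>\<in>\<Omega>. b powr \<mu> * (1 + ln b * (A \<omega> - \<mu>))) = card \<Omega> * b powr \<mu>"
    by (simp add: distrib_left sum.distrib mult.assoc flip: sum_distrib_left)
  moreover have "(\<Sum>\<omega>\<in>\<Omega>. b powr \<mu> * (1 + ln b * (A \<omega> - \<mu>))) \<le> (\<Sum>\<omega>\<in>\<Omega>. b powr A \<omega>)"
    by (rule sum_mono) (rule tangent)
  ultimately show ?thesis by (simp add: \<mu>_def)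
qed

lemma one_minus_inverse_less_ln:
  fixes y :: real
  assumes "0 < y" "y \<noteq> 1"
  shows "1 - 1 / y < ln y"
proof -
  have "ln (1 / y) \<noteq> 1 / y - 1"
    using assms ln_eq_minus_one[of "1 / y"] by auto
  with ln_le_minus_one[of "1 / y"] assms have "ln (1 / y) < 1 / y - 1" by simp
  with assms show ?thesis by (simp add: ln_div)
qed

lemma bin_entropy_less_one:
  assumes "0 < p" "p < 1" "p \<noteq> 1/2"
  shows "bin_entropy p < 1"
proof -
  have "p * (1 - 1 / (2 * p)) < p * ln (2 * p)"
    using assms by (intro mult_strict_left_mono one_minus_inverse_less_ln) auto
  moreover have "(1 - p) * (1 - 1 / (2 * (1 - p))) < (1 - p) * ln (2 * (1 - p))"
    using assms by (intro mult_strict_left_mono one_minus_inverse_less_ln) auto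
  moreover have "p * (1 - 1 / (2 * p)) + (1 - p) * (1 - 1 / (2 * (1 - p))) = 0"
    using assms by (simp add: field_simps)
  ultimately have "0 < p * ln (2 * p) + (1 - p) * ln (2 * (1 - p))"
    by linarith
  also have "\<dots> = ln 2 * (1 - bin_entropy p)"
    using assms ln_mult[of 2 p] ln_mult[of 2 "1 - p"]
    by (simp add: bin_entropy_def log_def field_simps)
  finally show ?thesis by (simp add: zero_less_mult_iff)
qed

lemma ln_two_mult_bin_entropy:
  assumes "0 < p" "p < 1"
  shows "ln 2 * bin_entropy p = ln (1 + p / (1 - p)) - p * ln (p / (1 - p))"
proof -
  have "1 + p / (1 - p) = 1 / (1 - p)" using assms by (simp add: field_simps)
  with assms show ?thesis by (simp add: bin_entropy_def log_def ln_div field_simps)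
qed

lemma mult_one_minus_bin_entropy_le_log:
  fixes p c :: real
  assumes p: "0 < p" "p < 1" and "0 < c"
    and bound: "2 ^ k * (p / (1 - p)) powr (k * p) \<le> c * (1 + p / (1 - p)) ^ k"
  shows "k * (1 - bin_entropy p) \<le> log 2 c"
proof -
  define b where "b = p / (1 - p)"
  have "0 < b" using p by (simp add: b_def)
  have "0 < 2 ^ k * b powr (k * p)" using \<open>0 < b\<close> by simp
  with bound have "ln (2 ^ k * b powr (k * p)) \<le> ln (c * (1 + b) ^ k)"
    by (subst ln_le_cancel_iff) (auto simp: b_def)
  then have "k * (ln 2 - (ln (1 + b) - p * ln b)) \<le> ln c"
    using \<open>0 < b\<close> \<open>0 < c\<close> by (simp add: ln_mult ln_realpow ln_powr algebra_simps)
  also have "ln (1 + b) - p * ln b = ln 2 * bin_entropy p"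
    using p by (simp add: b_def ln_two_mult_bin_entropy)
  finally show ?thesis
    by (simp add: log_def field_simps)
qed

lemma sum_power_card_correct_guesses_le:
  fixes Y :: "bool list \<Rightarrow> 'r \<Rightarrow> 'y" and F :: "nat \<Rightarrow> 'y \<Rightarrow> bool" and b :: real
  assumes "finite R" "finite Ys" "\<And>x r. length x = n \<Longrightarrow> r \<in> R \<Longrightarrow> Y x r \<in> Ys"
    and "G \<subseteq> {..<n}" "0 \<le> b"
  shows "(\<Sum>(x, r)\<in>{x. length x = n} \<times> R. b ^ card {i\<in>G. F i (Y x r) = x ! i})
           \<le> card Ys * card R * ((1 + b) ^ card G * 2 ^ (n - card G))"
proof -
  let ?X = "{x::bool list. length x = n}"
  let ?agree = "\<lambda>y x. b ^ card {i\<in>G. F i y = x ! i}"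
  have "(\<Sum>(x, r)\<in>?X \<times> R. ?agree (Y x r) x) \<le> (\<Sum>(x, r)\<in>?X \<times> R. \<Sum>y\<in>Ys. ?agree y x)"
  proof (rule sum_mono)
    fix \<omega> assume "\<omega> \<in> ?X \<times> R"
    with assms show "(case \<omega> of (x, r) \<Rightarrow> ?agree (Y x r) x)
        \<le> (case \<omega> of (x, r) \<Rightarrow> \<Sum>y\<in>Ys. ?agree y x)"
      by (cases \<omega>) (auto intro!: member_le_sum)
  qed
  also have "\<dots> = (\<Sum>y\<in>Ys. \<Sum>r\<in>R. \<Sum>x\<in>?X. ?agree y x)"
    by (simp add: sum.cartesian_product[symmetric] sum.swap[of _ Ys] sum.swap[of _ R]
        flip: sum_distrib_left)
  also have "\<dots> = card Ys * card R * ((1 + b) ^ card G * 2 ^ (n - card G))"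
    using sum_lists_power_card_agree[OF assms(4), of b] by simp
  finally show ?thesis by (simp add: case_prod_unfold)
qed

lemma card_predictable_bits_le:
  fixes Y :: "bool list \<Rightarrow> 'r \<Rightarrow> 'y" and F :: "nat \<Rightarrow> 'y \<Rightarrow> bool" and p :: real
  assumes R: "finite R" "R \<noteq> {}"
    and Ys: "finite Ys" "\<And>x r. length x = n \<Longrightarrow> r \<in> R \<Longrightarrow> Y x r \<in> Ys"
    and G: "G \<subseteq> {..<n}"
    and p: "1/2 < p" "p < 1"
    and predicts: "\<And>i. i \<in> G \<Longrightarrow>
      p * (2 ^ n * card R) \<le> card {(x, r). length x = n \<and> r \<in> R \<and> F i (Y x r) = x ! i}"
  shows "card G * (1 - bin_entropy p) \<le> log 2 (card Ys)"
proof -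
  define \<Omega> where "\<Omega> = {x::bool list. length x = n} \<times> R"
  define A where "A = (\<lambda>(x, r). real (card {i\<in>G. F i (Y x r) = x ! i}))"
  define b where "b = p / (1 - p)"
  define k where "k = card G"
  have b: "1 < b" using p by (simp add: b_def field_simps)
  from R obtain r where "r \<in> R" by blast
  then have "Y (replicate n False) r \<in> Ys" using Ys by simp
  then have card_Ys: "0 < card Ys" using Ys card_gt_0_iff by blast
  have card_\<Omega>: "card \<Omega> = 2 ^ n * card R"
    by (simp add: \<Omega>_def card_cartesian_product card_bool_lists_length)
  have \<Omega>: "finite \<Omega>" "\<Omega> \<noteq> {}"
    using R card_\<Omega> by (auto simp: card_eq_0_iff[symmetric])
  have "(\<Sum>\<omega>\<in>\<Omega>. A \<omega>) = (\<Sum>i\<in>G. card {(x, r). length x = n \<and> r \<in> R \<and> F i (Y x r) = x ! i})"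
    using sum_card_filter_commute[OF \<Omega>(1) finite_subset[OF G],
        of "\<lambda>(x, r) i. F i (Y x r) = x ! i"]
    by (simp add: A_def case_prod_unfold \<Omega>_def flip: of_nat_sum)
      (auto intro!: sum.cong arg_cong[where f = card])
  also have "\<dots> \<ge> k * (p * card \<Omega>)"
    using sum_mono[of G "\<lambda>_. p * card \<Omega>"] predicts by (simp add: card_\<Omega> k_def)
  finally have mean: "k * p \<le> (\<Sum>\<omega>\<in>\<Omega>. A \<omega>) / card \<Omega>"
    using \<Omega> by (simp add: field_simps card_gt_0_iff)
  have "card \<Omega> * b powr (k * p) \<le> card \<Omega> * b powr ((\<Sum>\<omega>\<in>\<Omega>. A \<omega>) / card \<Omega>)"
    using b mean by (intro mult_left_mono powr_mono) auto
  also have "\<dots> \<le> (\<Sum>\<omega>\<in>\<Omega>. b powr A \<omega>)"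
    using \<Omega> b by (intro card_mult_powr_mean_le_sum_powr) auto
  also have "\<dots> = (\<Sum>(x, r)\<in>\<Omega>. b ^ card {i\<in>G. F i (Y x r) = x ! i})"
    using b by (simp add: A_def case_prod_unfold powr_realpow)
  also have "\<dots> \<le> card Ys * card R * ((1 + b) ^ k * 2 ^ (n - k))"
    unfolding \<Omega>_def k_def using R Ys G b by (intro sum_power_card_correct_guesses_le) auto
  finally have moment: "card \<Omega> * b powr (k * p) \<le> card Ys * card R * ((1 + b) ^ k * 2 ^ (n - k))" .
  have "k \<le> n" using G card_mono[OF _ G] by (simp add: k_def)
  then have "card \<Omega> = (2 ^ (n - k) * card R) * 2 ^ k"
    by (simp add: card_\<Omega> algebra_simps flip: power_add)
  with moment R have "2 ^ k * b powr (k * p) \<le> card Ys * (1 + b) ^ k"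
    by (simp add: card_gt_0_iff mult_ac)
  with p card_Ys show ?thesis
    unfolding k_def b_def by (intro mult_one_minus_bin_entropy_le_log) auto
qed

theorem mainTheorem10:
  fixes C :: "bool list \<Rightarrow> bool list" and n m q :: nat and \<epsilon> :: real and Q :: "nat set"
  assumes "\<And>x. length x = n \<Longrightarrow> length (C x) = m"
    and "q \<ge> 1"
    and "0 < \<epsilon>" and "\<epsilon> \<le> 1/2"
    and "Q \<subseteq> {0..<2*m}" and "card Q = q"
  shows "real (card {i \<in> {0..<n}. good n m C \<epsilon> i Q})
           \<le> real q / (1 - bin_entropy (1/2 + \<epsilon>/4))"
proof -
  define p where "p = 1/2 + \<epsilon>/4"
  define G where "G = {i \<in> {0..<n}. good n m C \<epsilon> i Q}"
  let ?R = "{r::bool list. length r = m}"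
  let ?Ys = "{y::bool list. length y = q}"
  have p: "1/2 < p" "p < 1" using assms(3,4) by (auto simp: p_def)
  have lists_finite: "finite ?R" "finite ?Ys" and "?R \<noteq> {}"
    using card_bool_lists_length[of m] card_bool_lists_length[of q]
    by (auto intro: card_ge_0_finite Ex_list_of_length)
  have view_length: "length (nths (C x @ r) Q) = q" if "length x = n" "r \<in> ?R" for x r
  proof -
    have "{i. i < length (C x @ r) \<and> i \<in> Q} = Q" using that assms(1,5) by auto
    then show ?thesis by (simp add: length_nths assms(6))
  qed
  have "\<forall>i\<in>G. \<exists>f. p * (2 ^ n * card ?R)
      \<le> card {(x, r). length x = n \<and> r \<in> ?R \<and> f (nths (C x @ r) Q) = x ! i}"
  proof
    fix i assume "i \<in> G"
    then obtain f where "p \<le> card {(x, r). length x = n \<and> length r = m \<and>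
        f (nths (C x @ r) Q) = x ! i} / 2 ^ (n + m)"
      by (auto simp: G_def good_def p_def)
    then show "\<exists>f. p * (2 ^ n * card ?R)
      \<le> card {(x, r). length x = n \<and> r \<in> ?R \<and> f (nths (C x @ r) Q) = x ! i}"
      by (intro exI[of _ f])
        (simp add: card_bool_lists_length power_add pos_le_divide_eq mult.commute)
  qed
  from bchoice[OF this] obtain F where "\<forall>i\<in>G. p * (2 ^ n * card ?R)
      \<le> card {(x, r). length x = n \<and> r \<in> ?R \<and> F i (nths (C x @ r) Q) = x ! i}"
    by blast
  then have "card G * (1 - bin_entropy p) \<le> log 2 (card ?Ys)"
    using p view_length lists_finite \<open>?R \<noteq> {}\<close>
    by (intro card_predictable_bits_le[where R = ?R and F = F and Y = "\<lambda>x r. nths (C x @ r) Q"])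
      (auto simp: G_def)
  moreover have "0 < 1 - bin_entropy p" using p bin_entropy_less_one by force
  ultimately show ?thesis
    by (simp add: G_def p_def card_bool_lists_length pos_le_divide_eq)
qed

end
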